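(* Let $K$ be a field and $X$ a finite connected poset. For every Lie automorphism $\varphi$ of $I(X,K)$, the map $\widetilde\varphi$ is also a Lie automorphism of $I(X,K)$.
   Context: $I(X,K)$ is the incidence algebra: functions $f:X\times X\to K$ with $f(x,y)=0$ unless $x\le y$, product $(fg)(x,y)=\sum_{x\le t\le y}f(x,t)g(t,y)$; $e_{xy}$ ($x\le y$) is the basis element equal to $1$ at $(x,y)$ and $0$ elsewhere. A Lie automorphism is a bijective linear map preserving $[f,g]=fg-gf$. Let $l(\lfloor x,y\rfloor)$ be the maximum length of a chain in $\{z:x\le z\le y\}$, $L_i=\mathrm{span}_K\{e_{xy}: l(\lfloor x,y\rfloor)=i\}$ ($i\ge0$), so $I(X,K)=\bigoplus_i L_i$. $\widetilde\varphi$ is the linear map sending $e_{xy}\in L_i$ to the $L_i$-component of $\varphi(e_{xy})$ (one has $\varphi(e_{xy})-\widetilde\varphi(e_{xy})\in\bigoplus_{k>i}L_k$). Connected means any two elements are joined by a sequence in which consecutive elements are in a covering relation. *)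

theory Defs
  imports Main "HOL-Library.Function_Algebras"
begin

text \<open>The poset X is the finite type 'a with its partial order; K is the field 'k.
Elements of the incidence algebra are functions f :: 'a => 'a => 'k vanishing off the order.\<close>

definition incidence :: "('a::{order,finite} \<Rightarrow> 'a \<Rightarrow> 'k::field) set" where
  "incidence = {f. \<forall>x y. \<not> x \<le> y \<longrightarrow> f x y = 0}"

definition imult :: "('a::{order,finite} \<Rightarrow> 'a \<Rightarrow> 'k::field) \<Rightarrow> ('a \<Rightarrow> 'a \<Rightarrow> 'k) \<Rightarrow> ('a \<Rightarrow> 'a \<Rightarrow> 'k)" where
  "imult f g = (\<lambda>x y. \<Sum>t\<in>{t. x \<le> t \<and> t \<le> y}. f x t * g t y)"

definition ibracket :: "('a::{order,finite} \<Rightarrow> 'a \<Rightarrow> 'k::field) \<Rightarrow> ('a \<Rightarrow> 'a \<Rightarrow> 'k) \<Rightarrow> ('a \<Rightarrow> 'a \<Rightarrow> 'k)" where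
  "ibracket f g = imult f g - imult g f"

definition iscale :: "'k::field \<Rightarrow> ('a \<Rightarrow> 'a \<Rightarrow> 'k) \<Rightarrow> ('a \<Rightarrow> 'a \<Rightarrow> 'k)" where
  "iscale c f = (\<lambda>x y. c * f x y)"

definition ebasis :: "'a::{order,finite} \<Rightarrow> 'a \<Rightarrow> ('a \<Rightarrow> 'a \<Rightarrow> 'k::field)" where
  "ebasis x y = (\<lambda>u v. if u = x \<and> v = y then 1 else 0)"

definition lie_automorphism :: "(('a::{order,finite} \<Rightarrow> 'a \<Rightarrow> 'k::field) \<Rightarrow> ('a \<Rightarrow> 'a \<Rightarrow> 'k)) \<Rightarrow> bool" where
  "lie_automorphism \<phi> \<longleftrightarrow>
     bij_betw \<phi> incidence incidence \<and>
     (\<forall>f\<in>incidence. \<forall>g\<in>incidence. \<phi> (f + g) = \<phi> f + \<phi> g) \<and>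
     (\<forall>c. \<forall>f\<in>incidence. \<phi> (iscale c f) = iscale c (\<phi> f)) \<and>
     (\<forall>f\<in>incidence. \<forall>g\<in>incidence. \<phi> (ibracket f g) = ibracket (\<phi> f) (\<phi> g))"

definition is_chain :: "'a::order set \<Rightarrow> bool" where
  "is_chain C \<longleftrightarrow> (\<forall>a\<in>C. \<forall>b\<in>C. a \<le> b \<or> b \<le> a)"

definition ilen :: "'a::{order,finite} \<Rightarrow> 'a \<Rightarrow> nat" where
  "ilen x y = Max {card C - 1 | C. C \<subseteq> {z. x \<le> z \<and> z \<le> y} \<and> is_chain C}"

definition Lcomp :: "nat \<Rightarrow> ('a::{order,finite} \<Rightarrow> 'a \<Rightarrow> 'k::field) \<Rightarrow> ('a \<Rightarrow> 'a \<Rightarrow> 'k)" where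
  "Lcomp i f = (\<lambda>x y. if x \<le> y \<and> ilen x y = i then f x y else 0)"

definition tilde :: "(('a::{order,finite} \<Rightarrow> 'a \<Rightarrow> 'k::field) \<Rightarrow> ('a \<Rightarrow> 'a \<Rightarrow> 'k)) \<Rightarrow> ('a \<Rightarrow> 'a \<Rightarrow> 'k) \<Rightarrow> ('a \<Rightarrow> 'a \<Rightarrow> 'k)" where
  "tilde \<phi> f = (\<Sum>p\<in>{(x, y). x \<le> y}. iscale (f (fst p) (snd p))
                   (Lcomp (ilen (fst p) (snd p)) (\<phi> (ebasis (fst p) (snd p)))))"

definition covers :: "'a::order \<Rightarrow> 'a \<Rightarrow> bool" where
  "covers x y \<longleftrightarrow> x < y \<and> \<not> (\<exists>z. x < z \<and> z < y)"

definition poset_connected :: "'a::order itself \<Rightarrow> bool" where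
  "poset_connected _ \<longleftrightarrow> (\<forall>a b::'a. (\<lambda>x y. covers x y \<or> covers y x)\<^sup>*\<^sup>* a b)"

end

theory Submission
  imports Defs
begin

text \<open>Composing a Lie automorphism with an inner automorphism \<open>exp (\<alpha> ad e\<^sub>s\<^sub>t)\<close>, \<open>s < t\<close>,
  does not change its \<open>tilde\<close>, because \<open>ad e\<^sub>s\<^sub>t\<close> raises the level of every element of \<open>L\<^sub>i\<close>.
  With such compositions the off-diagonal part of the image of the diagonal subalgebra \<open>D\<close>
  can be pushed up level by level, until the automorphism \<open>\<psi>\<close> maps \<open>D\<close> onto \<open>D\<close>. Then \<open>\<psi>\<close>
  maps each common eigenvector \<open>e\<^sub>x\<^sub>y\<close> of \<open>ad D\<close> to a multiple of another one, \<open>e\<^sub>u\<^sub>v\<close>, and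
  \<open>l(x,y) = l(u,v)\<close> because \<open>\<psi>\<close> and \<open>\<psi>\<^sup>-\<^sup>1\<close> preserve the filtration \<open>\<Oplus>\<^sub>k\<^sub>\<ge>\<^sub>i L\<^sub>k\<close>;
  hence \<open>tilde \<psi> = \<psi>\<close>.\<close>

section \<open>The incidence algebra\<close>

lemma sum_apply2: "(\<Sum>p\<in>P. g p) u v = (\<Sum>p\<in>P. g p u v)"
  by (induction P rule: infinite_finite_induct) auto

lemma sum_Collect_UNIV: "(\<Sum>t\<in>{t::'a::finite. P t}. F t) = (\<Sum>t\<in>UNIV. if P t then F t else 0)"
  using sum.inter_filter[of UNIV F P] by simp

lemma double_sum_Collect_UNIV:
  "(\<Sum>s\<in>{s::'a::finite. P s}. \<Sum>t\<in>{t::'b::finite. Q s t}. F s t)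
   = (\<Sum>s\<in>UNIV. \<Sum>t\<in>UNIV. if P s \<and> Q s t then F s t else 0)"
  unfolding sum_Collect_UNIV by (rule sum.cong) auto

lemma imult_assoc: "imult (imult f g) h = imult f (imult g h)"
proof (intro ext)
  fix x y :: 'a
  have "imult (imult f g) h x y
      = (\<Sum>s\<in>{s. x \<le> s \<and> s \<le> y}. \<Sum>t\<in>{t. x \<le> t \<and> t \<le> s}. f x t * g t s * h s y)"
    by (simp add: imult_def sum_distrib_right)
  also have "\<dots> = (\<Sum>s\<in>UNIV. \<Sum>t\<in>UNIV.
      if (x \<le> s \<and> s \<le> y) \<and> (x \<le> t \<and> t \<le> s) then f x t * g t s * h s y else 0)"
    by (rule double_sum_Collect_UNIV)
  also have "\<dots> = (\<Sum>t\<in>UNIV. \<Sum>s\<in>UNIV.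
      if (x \<le> s \<and> s \<le> y) \<and> (x \<le> t \<and> t \<le> s) then f x t * g t s * h s y else 0)"
    by (rule sum.swap)
  also have "\<dots> = (\<Sum>t\<in>UNIV. \<Sum>s\<in>UNIV.
      if (x \<le> t \<and> t \<le> y) \<and> (t \<le> s \<and> s \<le> y) then f x t * g t s * h s y else 0)"
    by (intro sum.cong refl) (auto intro: order_trans)
  also have "\<dots> = (\<Sum>t\<in>{t. x \<le> t \<and> t \<le> y}. \<Sum>s\<in>{s. t \<le> s \<and> s \<le> y}. f x t * g t s * h s y)"
    by (rule double_sum_Collect_UNIV[symmetric])
  also have "\<dots> = imult f (imult g h) x y"
    by (simp add: imult_def sum_distrib_left mult.assoc)
  finally show "imult (imult f g) h x y = imult f (imult g h) x y" .
qed

lemma imult_add_left: "imult (f + g) h = imult f h + imult g h"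
  by (auto simp: imult_def fun_eq_iff distrib_right sum.distrib)

lemma imult_add_right: "imult h (f + g) = imult h f + imult h g"
  by (auto simp: imult_def fun_eq_iff distrib_left sum.distrib)

lemma imult_diff_left: "imult (f - g) h = imult f h - imult g h"
  by (auto simp: imult_def fun_eq_iff left_diff_distrib sum_subtractf)

lemma imult_diff_right: "imult h (f - g) = imult h f - imult h g"
  by (auto simp: imult_def fun_eq_iff right_diff_distrib sum_subtractf)

lemma imult_iscale_left: "imult (iscale c f) h = iscale c (imult f h)"
  by (auto simp: imult_def iscale_def fun_eq_iff sum_distrib_left mult.assoc)

lemma imult_iscale_right: "imult h (iscale c f) = iscale c (imult h f)"
  by (auto simp: imult_def iscale_def fun_eq_iff sum_distrib_left mult.left_commute)

lemma imult_zero_left [simp]: "imult 0 h = 0"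
  by (auto simp: imult_def fun_eq_iff)

lemma imult_zero_right [simp]: "imult h 0 = 0"
  by (auto simp: imult_def fun_eq_iff)

lemma iscale_apply: "iscale c f x y = c * f x y"
  by (simp add: iscale_def)

lemma iscale_add: "iscale c (f + g) = iscale c f + iscale c g"
  by (simp add: iscale_def fun_eq_iff distrib_left)

lemma iscale_diff: "iscale c (f - g) = iscale c f - iscale c g"
  by (simp add: iscale_def fun_eq_iff right_diff_distrib)

lemma iscale_add_left: "iscale (c + d) f = iscale c f + iscale d f"
  by (simp add: iscale_def fun_eq_iff distrib_right)

lemma iscale_iscale: "iscale c (iscale d f) = iscale (c * d) f"
  by (simp add: iscale_def fun_eq_iff mult.assoc)

lemma iscale_zero [simp]: "iscale 0 f = 0" "iscale c 0 = 0"
  by (simp_all add: iscale_def fun_eq_iff)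

lemma ibracket_add_left: "ibracket (f + g) h = ibracket f h + ibracket g h"
  by (simp add: ibracket_def imult_add_left imult_add_right)

lemma ibracket_add_right: "ibracket h (f + g) = ibracket h f + ibracket h g"
  by (simp add: ibracket_def imult_add_left imult_add_right)

lemma ibracket_iscale_left: "ibracket (iscale c f) h = iscale c (ibracket f h)"
  by (simp add: ibracket_def imult_iscale_left imult_iscale_right iscale_diff)

lemma ibracket_iscale_right: "ibracket h (iscale c f) = iscale c (ibracket h f)"
  by (simp add: ibracket_def imult_iscale_left imult_iscale_right iscale_diff)

lemma ibracket_derivation:
  "ibracket e (ibracket f g) = ibracket (ibracket e f) g + ibracket f (ibracket e g)"
  by (simp add: ibracket_def imult_diff_left imult_diff_right imult_assoc algebra_simps)

lemma imult_incidence [simp]: "imult f g \<in> incidence"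
  by (auto simp: incidence_def imult_def intro!: sum.neutral dest: order_trans)

lemma incidence_add [simp]: "f \<in> incidence \<Longrightarrow> g \<in> incidence \<Longrightarrow> f + g \<in> incidence"
  by (simp add: incidence_def)

lemma incidence_diff [simp]: "f \<in> incidence \<Longrightarrow> g \<in> incidence \<Longrightarrow> f - g \<in> incidence"
  by (simp add: incidence_def)

lemma incidence_iscale [simp]: "f \<in> incidence \<Longrightarrow> iscale c f \<in> incidence"
  by (simp add: incidence_def iscale_def)

lemma incidence_zero [simp]: "0 \<in> incidence"
  by (simp add: incidence_def)

lemma ibracket_incidence [simp]: "ibracket f g \<in> incidence"
  by (simp add: ibracket_def)

lemma incidence_sum: "(\<And>p. p \<in> P \<Longrightarrow> g p \<in> incidence) \<Longrightarrow> (\<Sum>p\<in>P. g p) \<in> incidence"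
  by (induction P rule: infinite_finite_induct) auto

lemma imult_diag: "imult f g u u = f u u * g u u"
proof -
  have "{t. u \<le> t \<and> t \<le> u} = {u}" by (auto intro: order_antisym)
  then show ?thesis by (simp add: imult_def)
qed

lemma ebasis_apply: "ebasis a b u v = (if u = a \<and> v = b then 1 else 0)"
  by (simp add: ebasis_def)

lemma ebasis_incidence [simp]: "x \<le> y \<Longrightarrow> ebasis x y \<in> incidence"
  by (auto simp: incidence_def ebasis_def)

lemma ebasis_nonzero: "ebasis x y \<noteq> 0"
  by (metis ebasis_apply zero_fun_apply zero_neq_one)

lemma imult_ebasis_left:
  "imult (ebasis s t) g u v = (if u = s \<and> s \<le> t \<and> t \<le> v then g t v else 0)"
proof -
  have "imult (ebasis s t) g u v
      = (\<Sum>\<tau>\<in>{\<tau>. u \<le> \<tau> \<and> \<tau> \<le> v}. if \<tau> = t then (if u = s then g t v else 0) else 0)"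
    unfolding imult_def ebasis_def by (intro sum.cong refl) auto
  then show ?thesis by simp
qed

lemma imult_ebasis_right:
  "imult g (ebasis s t) u v = (if v = t \<and> u \<le> s \<and> s \<le> t then g u s else 0)"
proof -
  have "imult g (ebasis s t) u v
      = (\<Sum>\<tau>\<in>{\<tau>. u \<le> \<tau> \<and> \<tau> \<le> v}. if \<tau> = s then (if v = t then g u s else 0) else 0)"
    unfolding imult_def ebasis_def by (intro sum.cong refl) auto
  then show ?thesis by auto
qed

lemma imult_ebasis_ebasis:
  "imult (ebasis a b) (ebasis c d) = (if b = c \<and> a \<le> b \<and> b \<le> d then ebasis a d else 0)"
  by (auto simp: fun_eq_iff imult_ebasis_left ebasis_apply)

lemma ibracket_ebasis_apply:
  assumes "g \<in> incidence" "s \<le> t"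
  shows "ibracket (ebasis s t) g u v = (if u = s then g t v else 0) - (if v = t then g u s else 0)"
  using assms by (auto simp: ibracket_def imult_ebasis_left imult_ebasis_right incidence_def
      intro: order_trans)

lemma ibracket_ebasis_chain: "x < y \<Longrightarrow> y \<le> z \<Longrightarrow> ibracket (ebasis x y) (ebasis y z) = ebasis x z"
  by (auto simp: ibracket_def imult_ebasis_ebasis)

lemma ibracket_ebasis_diag: "x < y \<Longrightarrow> ibracket (ebasis x x) (ebasis x y) = ebasis x y"
  by (auto simp: ibracket_def imult_ebasis_ebasis)

lemma ebasis_square_zero: "s < t \<Longrightarrow> imult (ebasis s t) (ebasis s t) = 0"
  by (auto simp: imult_ebasis_ebasis)

lemma ebasis_sandwich_zero: "s < t \<Longrightarrow> imult (ebasis s t) (imult h (ebasis s t)) = 0"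
  by (auto simp: fun_eq_iff imult_ebasis_left imult_ebasis_right)

lemma incidence_ebasis_expansion:
  assumes "f \<in> incidence"
  shows "f = (\<Sum>p\<in>{(x, y). x \<le> y}. iscale (f (fst p) (snd p)) (ebasis (fst p) (snd p)))"
proof (intro ext)
  fix u v :: 'a
  have "(\<Sum>p\<in>{(x, y). x \<le> y}. iscale (f (fst p) (snd p)) (ebasis (fst p) (snd p))) u v
      = (\<Sum>p\<in>{(x, y). x \<le> y}. if p = (u, v) then f u v else 0)"
    unfolding sum_apply2 by (intro sum.cong refl) (auto simp: iscale_def ebasis_def)
  also have "\<dots> = f u v"
    using assms by (auto simp: incidence_def)
  finally show "f u v = (\<Sum>p\<in>{(x, y). x \<le> y}. iscale (f (fst p) (snd p)) (ebasis (fst p) (snd p))) u v" ..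
qed

context
  fixes \<Phi> :: "('a::{order,finite} \<Rightarrow> 'a \<Rightarrow> 'k::field) \<Rightarrow> ('a \<Rightarrow> 'a \<Rightarrow> 'k)"
  assumes lie: "lie_automorphism \<Phi>"
begin

lemma lie_automorphism_incidence: "f \<in> incidence \<Longrightarrow> \<Phi> f \<in> incidence"
  using lie by (auto simp: lie_automorphism_def bij_betw_def)

lemma lie_automorphism_add: "f \<in> incidence \<Longrightarrow> g \<in> incidence \<Longrightarrow> \<Phi> (f + g) = \<Phi> f + \<Phi> g"
  using lie by (simp add: lie_automorphism_def)

lemma lie_automorphism_iscale: "f \<in> incidence \<Longrightarrow> \<Phi> (iscale c f) = iscale c (\<Phi> f)"
  using lie by (simp add: lie_automorphism_def)

lemma lie_automorphism_ibracket:
  "f \<in> incidence \<Longrightarrow> g \<in> incidence \<Longrightarrow> \<Phi> (ibracket f g) = ibracket (\<Phi> f) (\<Phi> g)"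
  using lie by (simp add: lie_automorphism_def)

lemma lie_automorphism_zero: "\<Phi> 0 = 0"
  using lie_automorphism_add[of 0 0] by simp

lemma lie_automorphism_sum:
  "(\<And>p. p \<in> P \<Longrightarrow> g p \<in> incidence) \<Longrightarrow> \<Phi> (\<Sum>p\<in>P. g p) = (\<Sum>p\<in>P. \<Phi> (g p))"
  by (induction P rule: infinite_finite_induct)
    (simp_all add: lie_automorphism_zero lie_automorphism_add incidence_sum)

lemma lie_automorphism_ebasis_expansion:
  assumes "f \<in> incidence"
  shows "\<Phi> f = (\<Sum>p\<in>{(x, y). x \<le> y}. iscale (f (fst p) (snd p)) (\<Phi> (ebasis (fst p) (snd p))))"
proof -
  have "\<Phi> f = \<Phi> (\<Sum>p\<in>{(x, y). x \<le> y}. iscale (f (fst p) (snd p)) (ebasis (fst p) (snd p)))"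
    by (rule arg_cong[where f = \<Phi>, OF incidence_ebasis_expansion[OF assms]])
  also have "\<dots> = (\<Sum>p\<in>{(x, y). x \<le> y}. \<Phi> (iscale (f (fst p) (snd p)) (ebasis (fst p) (snd p))))"
    by (rule lie_automorphism_sum) auto
  finally show ?thesis
    by (auto simp: lie_automorphism_iscale intro!: sum.cong)
qed

lemma lie_automorphism_inv_into: "lie_automorphism (inv_into incidence \<Phi>)"
proof -
  let ?\<Psi> = "inv_into incidence \<Phi>"
  have bij: "bij_betw \<Phi> incidence incidence"
    using lie by (simp add: lie_automorphism_def)
  then have bij': "bij_betw ?\<Psi> incidence incidence"
    by (rule bij_betw_inv_into)
  have inc: "?\<Psi> f \<in> incidence" if "f \<in> incidence" for f
    using bij' that by (rule bij_betw_apply)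
  have \<Phi>\<Psi>: "\<Phi> (?\<Psi> f) = f" if "f \<in> incidence" for f
    using bij that by (rule bij_betw_inv_into_right)
  have \<Psi>\<Phi>: "?\<Psi> (\<Phi> f) = f" if "f \<in> incidence" for f
    using bij that by (rule bij_betw_inv_into_left)
  show ?thesis
    unfolding lie_automorphism_def
  proof (intro conjI ballI allI bij')
    fix f g :: "'a \<Rightarrow> 'a \<Rightarrow> 'k" assume f: "f \<in> incidence" and g: "g \<in> incidence"
    show "?\<Psi> (f + g) = ?\<Psi> f + ?\<Psi> g"
      using \<Psi>\<Phi>[of "?\<Psi> f + ?\<Psi> g"] lie_automorphism_add[OF inc[OF f] inc[OF g]] f g inc
      by (simp add: \<Phi>\<Psi>)
    show "?\<Psi> (ibracket f g) = ibracket (?\<Psi> f) (?\<Psi> g)"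
      using \<Psi>\<Phi>[of "ibracket (?\<Psi> f) (?\<Psi> g)"] lie_automorphism_ibracket[OF inc[OF f] inc[OF g]]
      by (simp add: \<Phi>\<Psi> f g)
  next
    fix c and f :: "'a \<Rightarrow> 'a \<Rightarrow> 'k" assume f: "f \<in> incidence"
    show "?\<Psi> (iscale c f) = iscale c (?\<Psi> f)"
      using \<Psi>\<Phi>[of "iscale c (?\<Psi> f)"] lie_automorphism_iscale[OF inc[OF f]] inc[OF f]
      by (simp add: \<Phi>\<Psi> f)
  qed
qed

end

lemma lie_automorphism_comp:
  assumes "lie_automorphism \<Phi>" "lie_automorphism \<Psi>"
  shows "lie_automorphism (\<Phi> \<circ> \<Psi>)"
  using assms lie_automorphism_incidence[OF assms(2)]
  by (auto simp: lie_automorphism_def intro: bij_betw_trans)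

lemma lie_automorphism_cong:
  assumes "lie_automorphism \<Phi>" "\<And>f. f \<in> incidence \<Longrightarrow> \<Psi> f = \<Phi> f"
  shows "lie_automorphism \<Psi>"
  using assms bij_betw_cong[of incidence \<Phi> \<Psi>] by (simp add: lie_automorphism_def)

lemma ilen_set_finite:
  "finite {card C - 1 | C. C \<subseteq> {z::'a::{order,finite}. x \<le> z \<and> z \<le> y} \<and> is_chain C}"
proof -
  have "{card C - 1 | C. C \<subseteq> {z::'a. x \<le> z \<and> z \<le> y} \<and> is_chain C}
        = (\<lambda>C. card C - 1) ` {C. C \<subseteq> {z. x \<le> z \<and> z \<le> y} \<and> is_chain C}" by auto
  then show ?thesis by simp
qed

lemma card_chain_le_ilen:
  fixes x y :: "'a::{order,finite}"
  assumes "C \<subseteq> {z. x \<le> z \<and> z \<le> y}" "is_chain C"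
  shows "card C - 1 \<le> ilen x y"
  unfolding ilen_def using assms by (intro Max_ge[OF ilen_set_finite]) auto

lemma ilen_attained:
  fixes x y :: "'a::{order,finite}"
  obtains C where "C \<subseteq> {z. x \<le> z \<and> z \<le> y}" "is_chain C" "ilen x y = card C - 1"
proof -
  have "ilen x y \<in> {card C - 1 | C. C \<subseteq> {z::'a. x \<le> z \<and> z \<le> y} \<and> is_chain C}"
    unfolding ilen_def
    by (rule Max_in[OF ilen_set_finite]) (auto intro!: exI[of _ "{}"] simp: is_chain_def)
  then show ?thesis using that by auto
qed

lemma ilen_refl [simp]: "ilen (x::'a::{order,finite}) x = 0"
proof -
  obtain C where C: "C \<subseteq> {z. x \<le> z \<and> z \<le> x}" "ilen x x = card C - 1"
    using ilen_attained by metis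
  have "C \<subseteq> {x}" using C(1) by (auto intro: order_antisym)
  then have "card C \<le> 1" using card_mono[of "{x}" C] by simp
  then show ?thesis using C(2) by simp
qed

lemma ilen_pos:
  fixes x y :: "'a::{order,finite}"
  assumes "x < y"
  shows "0 < ilen x y"
proof -
  have "card {x, y} - 1 \<le> ilen x y"
    using assms by (intro card_chain_le_ilen) (auto simp: is_chain_def)
  then show ?thesis using assms by simp
qed

lemma ilen_less_card: "ilen (x::'a::{order,finite}) y < card (UNIV::'a set)"
proof -
  obtain C :: "'a set" where "ilen x y = card C - 1"
    using ilen_attained by metis
  moreover have "card C \<le> card (UNIV::'a set)" by (rule card_mono) auto
  ultimately show ?thesis using finite_UNIV_card_ge_0[where 'a='a] by simp
qed

lemma ilen_superadditive:
  fixes x y z :: "'a::{order,finite}"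
  assumes "x \<le> y" "y \<le> z"
  shows "ilen x y + ilen y z \<le> ilen x z"
proof -
  obtain C1 where C1: "C1 \<subseteq> {w. x \<le> w \<and> w \<le> y}" "is_chain C1" "ilen x y = card C1 - 1"
    using ilen_attained by metis
  obtain C2 where C2: "C2 \<subseteq> {w. y \<le> w \<and> w \<le> z}" "is_chain C2" "ilen y z = card C2 - 1"
    using ilen_attained by metis
  define A where "A = insert y C1"
  define B where "B = insert y C2"
  have A: "A \<subseteq> {w. x \<le> w \<and> w \<le> y}" using C1 assms by (auto simp: A_def)
  have B: "B \<subseteq> {w. y \<le> w \<and> w \<le> z}" using C2 assms by (auto simp: B_def)
  have "A \<inter> B = {y}" using A B by (auto simp: A_def B_def intro: order_antisym)
  then have "card (A \<union> B) = card A + card B - 1"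
    using card_Un_Int[of A B] by simp
  moreover have "card (A \<union> B) - 1 \<le> ilen x z"
  proof (rule card_chain_le_ilen)
    show "A \<union> B \<subseteq> {w. x \<le> w \<and> w \<le> z}" using A B assms by (auto intro: order_trans)
    show "is_chain (A \<union> B)"
      using C1(2) C2(2) A B unfolding is_chain_def A_def B_def by (auto intro: order_trans)
  qed
  moreover have "card C1 \<le> card A" "card C2 \<le> card B" "1 \<le> card A" "1 \<le> card B"
    unfolding A_def B_def by (auto intro: card_mono simp: card_insert_if Suc_le_eq card_gt_0_iff)
  ultimately show ?thesis using C1(3) C2(3) by linarith
qed

lemma ilen_Suc_le_split:
  fixes x z :: "'a::{order,finite}"
  assumes "Suc k \<le> ilen x z"
  obtains y where "x < y" "y \<le> z" "k \<le> ilen y z"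
proof -
  obtain C where C: "C \<subseteq> {w. x \<le> w \<and> w \<le> z}" "is_chain C" "ilen x z = card C - 1"
    using ilen_attained by metis
  have card_C: "Suc (Suc k) \<le> card C" using assms C(3) by linarith
  then obtain m where m: "m \<in> C" "\<forall>b\<in>C. b \<le> m \<longrightarrow> m = b"
    using finite_has_minimal[of C] by fastforce
  define C' where "C' = C - {m}"
  have card_C': "card C' = card C - 1" unfolding C'_def using m(1) by simp
  then obtain y where y: "y \<in> C'" "\<forall>b\<in>C'. b \<le> y \<longrightarrow> y = b"
    using finite_has_minimal[of C'] card_C by fastforce
  have y_least: "\<forall>b\<in>C'. y \<le> b"
    using y C(2) unfolding is_chain_def C'_def by auto
  have "m \<le> y \<or> y \<le> m" using C(2) m(1) y(1) unfolding is_chain_def C'_def by auto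
  then have "m < y" using m y(1) unfolding C'_def by (auto simp: less_le)
  moreover have "x \<le> m" using C(1) m(1) by auto
  moreover have "y \<le> z" using C(1) y(1) unfolding C'_def by auto
  moreover have "card C' - 1 \<le> ilen y z"
  proof (rule card_chain_le_ilen)
    show "C' \<subseteq> {w. y \<le> w \<and> w \<le> z}" using y_least C(1) unfolding C'_def by auto
    show "is_chain C'" using C(2) unfolding is_chain_def C'_def by auto
  qed
  ultimately show ?thesis using that card_C card_C' by force
qed

section \<open>The filtration by interval length\<close>

definition filtration :: "nat \<Rightarrow> ('a::{order,finite} \<Rightarrow> 'a \<Rightarrow> 'k::field) set" where
  "filtration i = {f \<in> incidence. \<forall>u v. f u v \<noteq> 0 \<longrightarrow> i \<le> ilen u v}"

lemma filtration_incidence: "f \<in> filtration i \<Longrightarrow> f \<in> incidence"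
  by (simp add: filtration_def)

lemma filtration_0: "filtration 0 = incidence"
  by (auto simp: filtration_def)

lemma filtration_antimono: "i \<le> j \<Longrightarrow> f \<in> filtration j \<Longrightarrow> f \<in> filtration i"
  by (auto simp: filtration_def intro: le_trans)

lemma filtration_zero: "0 \<in> filtration i"
  by (simp add: filtration_def)

lemma filtration_add: "f \<in> filtration i \<Longrightarrow> g \<in> filtration i \<Longrightarrow> f + g \<in> filtration i"
  by (simp add: filtration_def) (metis add.right_neutral)

lemma filtration_diff: "f \<in> filtration i \<Longrightarrow> g \<in> filtration i \<Longrightarrow> f - g \<in> filtration i"
  by (simp add: filtration_def) metis

lemma filtration_iscale: "f \<in> filtration i \<Longrightarrow> iscale c f \<in> filtration i"
  by (simp add: filtration_def iscale_apply)

lemma filtration_sum: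
  "(\<And>p. p \<in> P \<Longrightarrow> g p \<in> filtration i) \<Longrightarrow> (\<Sum>p\<in>P. g p) \<in> filtration i"
  by (induction P rule: infinite_finite_induct) (auto intro: filtration_add filtration_zero)

lemma ebasis_filtration: "x \<le> y \<Longrightarrow> ebasis x y \<in> filtration (ilen x y)"
  by (simp add: filtration_def ebasis_apply)

lemma filtration_1_diag: "f \<in> filtration 1 \<Longrightarrow> f u u = 0"
  using ilen_refl[of u] by (fastforce simp: filtration_def)

lemma imult_filtration:
  assumes "f \<in> filtration i" "g \<in> filtration j"
  shows "imult f g \<in> filtration (i + j)"
  unfolding filtration_def
proof (intro CollectI conjI allI impI imult_incidence)
  fix u v
  assume "imult f g u v \<noteq> 0"
  then obtain t where t: "u \<le> t" "t \<le> v" "f u t * g t v \<noteq> 0"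
    unfolding imult_def by (metis (mono_tags, lifting) mem_Collect_eq sum.neutral)
  then have "i \<le> ilen u t" "j \<le> ilen t v"
    using assms by (auto simp: filtration_def)
  then show "i + j \<le> ilen u v"
    using ilen_superadditive[OF t(1,2)] by linarith
qed

lemma ibracket_filtration:
  "f \<in> filtration i \<Longrightarrow> g \<in> filtration j \<Longrightarrow> ibracket f g \<in> filtration (i + j)"
  unfolding ibracket_def
  by (metis filtration_diff imult_filtration add.commute)

lemma ibracket_filtration_1: "ibracket f g \<in> filtration 1"
proof -
  have "u < v" if "ibracket f g u v \<noteq> 0" for u v
    using that ibracket_incidence[of f g]
    by (auto simp: ibracket_def imult_diag mult.commute incidence_def less_le)
  then show ?thesis
    by (auto simp: filtration_def Suc_le_eq ilen_pos)
qed

lemma lie_automorphism_ebasis_filtration_1: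
  assumes lie: "lie_automorphism \<Phi>" and "x < y"
  shows "\<Phi> (ebasis x y) \<in> filtration 1"
proof -
  have "\<Phi> (ebasis x y) = \<Phi> (ibracket (ebasis x x) (ebasis x y))"
    by (simp add: ibracket_ebasis_diag[OF \<open>x < y\<close>])
  also have "\<dots> = ibracket (\<Phi> (ebasis x x)) (\<Phi> (ebasis x y))"
    using \<open>x < y\<close> by (simp add: lie_automorphism_ibracket[OF lie] less_imp_le)
  finally show ?thesis by (metis ibracket_filtration_1)
qed

lemma lie_automorphism_ebasis_filtration:
  assumes lie: "lie_automorphism \<Phi>"
  shows "x \<le> y \<Longrightarrow> k \<le> ilen x y \<Longrightarrow> \<Phi> (ebasis x y) \<in> filtration k"
proof (induction k arbitrary: x y)
  case 0
  then show ?case by (simp add: filtration_0 lie_automorphism_incidence[OF lie])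
next
  case (Suc k)
  then obtain y' where y': "x < y'" "y' \<le> y" "k \<le> ilen y' y"
    using ilen_Suc_le_split by blast
  have "\<Phi> (ebasis x y) = \<Phi> (ibracket (ebasis x y') (ebasis y' y))"
    by (simp add: ibracket_ebasis_chain[OF y'(1,2)])
  also have "\<dots> = ibracket (\<Phi> (ebasis x y')) (\<Phi> (ebasis y' y))"
    using y' by (simp add: lie_automorphism_ibracket[OF lie] less_imp_le)
  finally show ?case
    using ibracket_filtration[OF lie_automorphism_ebasis_filtration_1[OF lie y'(1)] Suc.IH[OF y'(2,3)]]
    by simp
qed

lemma lie_automorphism_filtration:
  assumes lie: "lie_automorphism \<Phi>" and f: "f \<in> filtration i"
  shows "\<Phi> f \<in> filtration i"
proof -
  have "iscale (f x y) (\<Phi> (ebasis x y)) \<in> filtration i" if "x \<le> y" for x y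
  proof (cases "f x y = 0")
    case False
    then have "i \<le> ilen x y" using f by (simp add: filtration_def)
    then show ?thesis
      using that by (intro filtration_iscale lie_automorphism_ebasis_filtration[OF lie])
  qed (simp add: filtration_zero)
  then show ?thesis
    using f by (auto simp: lie_automorphism_ebasis_expansion[OF lie] filtration_incidence
        intro!: filtration_sum)
qed

definition diagonal :: "('a \<Rightarrow> 'a \<Rightarrow> 'k::zero) set" where
  "diagonal = {f. \<forall>u v. u \<noteq> v \<longrightarrow> f u v = 0}"

definition diagpart :: "('a \<Rightarrow> 'a \<Rightarrow> 'k::zero) \<Rightarrow> ('a \<Rightarrow> 'a \<Rightarrow> 'k)" where
  "diagpart f = (\<lambda>u v. if u = v then f u v else 0)"

lemma diagonal_incidence: "d \<in> diagonal \<Longrightarrow> d \<in> incidence"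
  by (auto simp: diagonal_def incidence_def)

lemma ebasis_diagonal: "ebasis a a \<in> diagonal"
  by (simp add: diagonal_def ebasis_apply)

lemma diagpart_diagonal: "diagpart f \<in> diagonal"
  by (simp add: diagonal_def diagpart_def)

lemma minus_diagpart_filtration_1:
  assumes "f \<in> incidence"
  shows "f - diagpart f \<in> filtration 1"
proof -
  have "u < v" if "(f - diagpart f) u v \<noteq> 0" for u v
    using assms that by (auto simp: incidence_def diagpart_def less_le split: if_splits)
  moreover have "f - diagpart f \<in> incidence"
    by (intro incidence_diff assms diagonal_incidence diagpart_diagonal)
  ultimately show ?thesis
    by (auto simp: filtration_def Suc_le_eq ilen_pos)
qed

lemma imult_diagonal_left:
  assumes "d \<in> diagonal"
  shows "imult d f u v = (if u \<le> v then d u u * f u v else 0)"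
proof -
  have "imult d f u v = (\<Sum>t\<in>{t. u \<le> t \<and> t \<le> v}. if t = u then d u u * f u v else 0)"
    unfolding imult_def using assms by (intro sum.cong) (auto simp: diagonal_def)
  then show ?thesis by simp
qed

lemma imult_diagonal_right:
  assumes "d \<in> diagonal"
  shows "imult f d u v = (if u \<le> v then f u v * d v v else 0)"
proof -
  have "imult f d u v = (\<Sum>t\<in>{t. u \<le> t \<and> t \<le> v}. if t = v then f u v * d v v else 0)"
    unfolding imult_def using assms by (intro sum.cong) (auto simp: diagonal_def)
  then show ?thesis by simp
qed

lemma ibracket_diagonal_apply:
  assumes "d \<in> diagonal" "f \<in> incidence"
  shows "ibracket d f u v = (d u u - d v v) * f u v"
  using assms
  by (auto simp: ibracket_def imult_diagonal_left imult_diagonal_right incidence_def algebra_simps)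

lemma ibracket_diagonal_diagonal:
  assumes "d \<in> diagonal" "d' \<in> diagonal"
  shows "ibracket d d' = 0"
proof (intro ext)
  fix u v
  show "ibracket d d' u v = 0 u v"
    using assms by (cases "u = v") (simp_all add: ibracket_diagonal_apply diagonal_incidence diagonal_def)
qed

lemma ibracket_diagonal_ebasis:
  "d \<in> diagonal \<Longrightarrow> x \<le> y \<Longrightarrow> ibracket d (ebasis x y) = iscale (d x x - d y y) (ebasis x y)"
  by (auto simp: fun_eq_iff ibracket_diagonal_apply ebasis_apply iscale_apply)

text \<open>The diagonal of \<open>\<Phi> g\<close> only depends on the diagonal of \<open>g\<close>, because \<open>\<Phi>\<close> preserves
  \<open>filtration 1\<close>; hence every diagonal pattern is attained on the diagonal subalgebra.\<close>

lemma lie_automorphism_diagonal_preimage: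
  assumes lie: "lie_automorphism \<Phi>" and h: "h \<in> incidence"
  obtains d where "d \<in> diagonal" "\<And>u. \<Phi> d u u = h u u"
proof -
  have "h \<in> \<Phi> ` incidence"
    using h lie by (simp add: lie_automorphism_def bij_betw_def)
  then obtain g where g: "g \<in> incidence" "\<Phi> g = h" by blast
  have off: "g - diagpart g \<in> filtration 1"
    by (rule minus_diagpart_filtration_1[OF g(1)])
  have "\<Phi> g = \<Phi> (diagpart g) + \<Phi> (g - diagpart g)"
    using lie_automorphism_add[OF lie diagonal_incidence[OF diagpart_diagonal[of g]] filtration_incidence[OF off]]
    by simp
  then have "\<Phi> (diagpart g) u u = h u u" for u
    using g(2) filtration_1_diag[OF lie_automorphism_filtration[OF lie off]] by simp
  with diagpart_diagonal that show ?thesis by blast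
qed

section \<open>Exponentials of square-zero inner derivations\<close>

text \<open>For \<open>e\<close> with \<open>e e = 0\<close> and \<open>e h e = 0\<close> (e.g.\ \<open>e = e\<^sub>s\<^sub>t\<close> with \<open>s < t\<close>), the series
  \<open>exp (\<alpha> ad e)\<close> stops after the linear term.\<close>

definition exp_ad :: "('a::{order,finite} \<Rightarrow> 'a \<Rightarrow> 'k::field) \<Rightarrow> 'k \<Rightarrow> ('a \<Rightarrow> 'a \<Rightarrow> 'k) \<Rightarrow> ('a \<Rightarrow> 'a \<Rightarrow> 'k)" where
  "exp_ad e \<alpha> f = f + iscale \<alpha> (ibracket e f)"

context
  fixes e :: "'a::{order,finite} \<Rightarrow> 'a \<Rightarrow> 'k::field"
  assumes square_zero: "imult e e = 0"
    and sandwich_zero: "\<And>h. imult e (imult h e) = 0"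
begin

lemma imult_square_zero_left: "imult e (imult e h) = 0"
  by (metis imult_assoc square_zero imult_zero_left)

lemma imult_sandwich_zero_left: "imult e (imult h (imult k e)) = 0"
  using sandwich_zero[of "imult h k"] by (simp add: imult_assoc)

lemma imult_sandwich_zero_left': "imult e (imult h (imult e k)) = 0"
  using sandwich_zero[of h] by (metis imult_assoc imult_zero_left)

lemmas imult_square_zero_simps =
  square_zero sandwich_zero imult_square_zero_left imult_sandwich_zero_left imult_sandwich_zero_left'

lemma ibracket_ibracket_self: "ibracket e (ibracket e f) = 0"
  by (simp add: ibracket_def imult_diff_left imult_diff_right imult_assoc imult_square_zero_simps)

lemma ibracket_ibracket_ibracket_self: "ibracket (ibracket e f) (ibracket e g) = 0"
  by (simp add: ibracket_def imult_diff_left imult_diff_right imult_assoc imult_square_zero_simps)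

lemma exp_ad_incidence: "f \<in> incidence \<Longrightarrow> exp_ad e \<alpha> f \<in> incidence"
  by (simp add: exp_ad_def)

lemma exp_ad_exp_ad_uminus: "exp_ad e (- \<alpha>) (exp_ad e \<alpha> f) = f"
  by (simp add: exp_ad_def ibracket_add_right ibracket_iscale_right ibracket_ibracket_self
      add.assoc flip: iscale_add_left)

lemma exp_ad_ibracket: "exp_ad e \<alpha> (ibracket f g) = ibracket (exp_ad e \<alpha> f) (exp_ad e \<alpha> g)"
proof -
  have "ibracket (exp_ad e \<alpha> f) (exp_ad e \<alpha> g)
      = ibracket f g + iscale \<alpha> (ibracket f (ibracket e g)) + iscale \<alpha> (ibracket (ibracket e f) g)"
    by (simp add: exp_ad_def ibracket_add_left ibracket_add_right ibracket_iscale_left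
        ibracket_iscale_right ibracket_ibracket_ibracket_self add_ac)
  also have "\<dots> = ibracket f g + iscale \<alpha> (ibracket e (ibracket f g))"
    by (simp add: ibracket_derivation[of e f g] iscale_add add_ac)
  finally show ?thesis by (simp add: exp_ad_def)
qed

lemma lie_automorphism_exp_ad: "lie_automorphism (exp_ad e \<alpha>)"
  unfolding lie_automorphism_def
proof (intro conjI ballI allI)
  show "bij_betw (exp_ad e \<alpha>) incidence incidence"
    by (rule bij_betw_byWitness[where f' = "exp_ad e (- \<alpha>)"])
      (auto simp: exp_ad_incidence exp_ad_exp_ad_uminus
        intro: exp_ad_exp_ad_uminus[of "- \<alpha>", simplified])
next
  fix f g :: "'a \<Rightarrow> 'a \<Rightarrow> 'k"
  show "exp_ad e \<alpha> (f + g) = exp_ad e \<alpha> f + exp_ad e \<alpha> g"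
    by (simp add: exp_ad_def ibracket_add_right iscale_add add_ac)
  show "exp_ad e \<alpha> (ibracket f g) = ibracket (exp_ad e \<alpha> f) (exp_ad e \<alpha> g)"
    by (rule exp_ad_ibracket)
next
  fix c and f :: "'a \<Rightarrow> 'a \<Rightarrow> 'k"
  show "exp_ad e \<alpha> (iscale c f) = iscale c (exp_ad e \<alpha> f)"
    by (simp add: exp_ad_def ibracket_iscale_right iscale_add iscale_iscale mult.commute)
qed

end

lemma tilde_cong:
  assumes "\<And>x y. x \<le> y \<Longrightarrow> Lcomp (ilen x y) (\<Phi> (ebasis x y)) = Lcomp (ilen x y) (\<Psi> (ebasis x y))"
  shows "tilde \<Phi> = tilde \<Psi>"
  unfolding tilde_def using assms by (intro ext sum.cong) auto

lemma tilde_exp_ad_comp: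
  assumes lie: "lie_automorphism \<Phi>" and e: "e \<in> filtration 1"
  shows "tilde (exp_ad e \<alpha> \<circ> \<Phi>) = tilde \<Phi>"
proof (rule tilde_cong)
  fix x y :: 'a assume "x \<le> y"
  then have "ibracket e (\<Phi> (ebasis x y)) \<in> filtration (Suc (ilen x y))"
    using ibracket_filtration[OF e lie_automorphism_filtration[OF lie ebasis_filtration]] by simp
  then have "ibracket e (\<Phi> (ebasis x y)) u v = 0" if "ilen u v = ilen x y" for u v
    using that Suc_n_not_le_n by (fastforce simp: filtration_def)
  then show "Lcomp (ilen x y) ((exp_ad e \<alpha> \<circ> \<Phi>) (ebasis x y)) = Lcomp (ilen x y) (\<Phi> (ebasis x y))"
    by (auto simp: fun_eq_iff Lcomp_def exp_ad_def iscale_apply)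
qed

lemma tilde_eq_if_homogeneous:
  assumes lie: "lie_automorphism \<Phi>"
    and hom: "\<And>x y. x \<le> y \<Longrightarrow> Lcomp (ilen x y) (\<Phi> (ebasis x y)) = \<Phi> (ebasis x y)"
    and f: "f \<in> incidence"
  shows "tilde \<Phi> f = \<Phi> f"
  unfolding tilde_def lie_automorphism_ebasis_expansion[OF lie f]
  by (intro sum.cong) (auto simp: hom)

section \<open>Moving the image of the diagonal up the filtration\<close>

definition diag_preserved_below ::
    "nat \<Rightarrow> (('a::{order,finite} \<Rightarrow> 'a \<Rightarrow> 'k::field) \<Rightarrow> ('a \<Rightarrow> 'a \<Rightarrow> 'k)) \<Rightarrow> bool" where
  "diag_preserved_below k \<Phi> \<longleftrightarrow> (\<forall>d\<in>diagonal. \<forall>u v. u \<noteq> v \<longrightarrow> \<Phi> d u v \<noteq> 0 \<longrightarrow> k \<le> ilen u v)"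

lemma imult_apply_two_terms:
  assumes "s < t"
    and A: "\<And>u v. u \<noteq> v \<Longrightarrow> A u v \<noteq> 0 \<Longrightarrow> ilen s t \<le> ilen u v"
    and B: "\<And>u v. u \<noteq> v \<Longrightarrow> B u v \<noteq> 0 \<Longrightarrow> ilen s t \<le> ilen u v"
  shows "imult A B s t = A s s * B s t + A s t * B t t"
proof -
  have "A s \<tau> * B \<tau> t = 0" if "s < \<tau>" "\<tau> < t" for \<tau>
  proof -
    have "ilen s \<tau> + ilen \<tau> t \<le> ilen s t"
      using that by (intro ilen_superadditive) simp_all
    then have "ilen s \<tau> < ilen s t" "ilen \<tau> t < ilen s t"
      using ilen_pos[OF that(1)] ilen_pos[OF that(2)] by linarith+
    then show ?thesis using A[of s \<tau>] B[of \<tau> t] that by fastforce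
  qed
  then have "(\<Sum>\<tau>\<in>{\<tau>. s \<le> \<tau> \<and> \<tau> \<le> t}. A s \<tau> * B \<tau> t) = (\<Sum>\<tau>\<in>{s, t}. A s \<tau> * B \<tau> t)"
    using \<open>s < t\<close> by (intro sum.mono_neutral_right) (auto simp: less_le)
  then show ?thesis
    using \<open>s < t\<close> by (simp add: imult_def)
qed

lemma ibracket_ebasis_apply_eq_0:
  assumes g: "g \<in> incidence" and "s < t" "(u, v) \<noteq> (s, t)" "ilen u v \<le> ilen s t"
  shows "ibracket (ebasis s t) g u v = 0"
proof -
  have "g t v = 0" if "u = s" "v \<noteq> t"
  proof (rule ccontr)
    assume "g t v \<noteq> 0"
    then have "t < v" using g that by (auto simp: incidence_def less_le)
    then have "ilen s t < ilen s v"
      using ilen_superadditive[OF less_imp_le[OF \<open>s < t\<close>] less_imp_le] ilen_pos[of t v] by fastforce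
    then show False using assms(4) that by simp
  qed
  moreover have "g u s = 0" if "v = t" "u \<noteq> s"
  proof (rule ccontr)
    assume "g u s \<noteq> 0"
    then have "u < s" using g that by (auto simp: incidence_def less_le)
    then have "ilen s t < ilen u t"
      using ilen_superadditive[OF less_imp_le less_imp_le[OF \<open>s < t\<close>]] ilen_pos[of u s] by fastforce
    then show False using assms(4) that by simp
  qed
  ultimately show ?thesis
    using assms(3) by (simp add: ibracket_ebasis_apply[OF g less_imp_le[OF \<open>s < t\<close>]])
qed

text \<open>Images of diagonal elements commute; at an entry of the lowest level \<open>k\<close> of their
  off-diagonal parts this gives a proportionality relation.\<close>

lemma diag_preserved_below_entry_relation:
  assumes lie: "lie_automorphism \<Phi>" and below: "diag_preserved_below k \<Phi>"
    and st: "s < t" "ilen s t = k" and d: "d \<in> diagonal" and d': "d' \<in> diagonal"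
  shows "(\<Phi> d s s - \<Phi> d t t) * \<Phi> d' s t = (\<Phi> d' s s - \<Phi> d' t t) * \<Phi> d s t"
proof -
  have "ibracket (\<Phi> d) (\<Phi> d') = \<Phi> (ibracket d d')"
    using d d' by (simp add: lie_automorphism_ibracket[OF lie] diagonal_incidence)
  also have "\<dots> = 0"
    by (simp add: ibracket_diagonal_diagonal[OF d d'] lie_automorphism_zero[OF lie])
  finally have "imult (\<Phi> d) (\<Phi> d') s t = imult (\<Phi> d') (\<Phi> d) s t"
    by (simp add: ibracket_def fun_eq_iff)
  moreover have "imult (\<Phi> d) (\<Phi> d') s t = \<Phi> d s s * \<Phi> d' s t + \<Phi> d s t * \<Phi> d' t t"
    "imult (\<Phi> d') (\<Phi> d) s t = \<Phi> d' s s * \<Phi> d s t + \<Phi> d' s t * \<Phi> d t t"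
    using below d d' st by (auto simp: diag_preserved_below_def intro!: imult_apply_two_terms)
  ultimately show ?thesis by (simp add: algebra_simps)
qed

lemma exp_ad_clears_entry:
  assumes lie: "lie_automorphism \<Phi>" and below: "diag_preserved_below k \<Phi>"
    and st: "s < t" "ilen s t = k"
  obtains \<alpha> where "diag_preserved_below k (exp_ad (ebasis s t) \<alpha> \<circ> \<Phi>)"
    "\<And>d. d \<in> diagonal \<Longrightarrow> (exp_ad (ebasis s t) \<alpha> \<circ> \<Phi>) d s t = 0"
    "\<And>d u v. d \<in> diagonal \<Longrightarrow> (u, v) \<noteq> (s, t) \<Longrightarrow> ilen u v \<le> k \<Longrightarrow>
       (exp_ad (ebasis s t) \<alpha> \<circ> \<Phi>) d u v = \<Phi> d u v"
proof -
  obtain g where g: "g \<in> diagonal" "\<And>u. \<Phi> g u u = ebasis s s u u"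
    using lie_automorphism_diagonal_preimage[OF lie ebasis_incidence[of s s]] by auto
  have g_st: "\<Phi> g s s = 1" "\<Phi> g t t = 0"
    using g(2) st(1) by (auto simp: ebasis_apply)
  define \<alpha> where "\<alpha> = \<Phi> g s t"
  let ?\<Psi> = "exp_ad (ebasis s t) \<alpha> \<circ> \<Phi>"
  have inc: "\<Phi> d \<in> incidence" if "d \<in> diagonal" for d
    using that by (simp add: lie_automorphism_incidence[OF lie] diagonal_incidence)
  have \<Psi>_apply: "?\<Psi> d u v = \<Phi> d u v + \<alpha> * ibracket (ebasis s t) (\<Phi> d) u v" for d u v
    by (simp add: exp_ad_def iscale_apply)
  have cleared: "?\<Psi> d s t = 0" if d: "d \<in> diagonal" for d
  proof -
    have "\<Phi> d s t = (\<Phi> d s s - \<Phi> d t t) * \<alpha>"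
      using diag_preserved_below_entry_relation[OF lie below st d g(1)] by (simp add: g_st \<alpha>_def)
    moreover have "?\<Psi> d s t = \<Phi> d s t + \<alpha> * (\<Phi> d t t - \<Phi> d s s)"
      using st(1) by (simp only: \<Psi>_apply ibracket_ebasis_apply[OF inc[OF d] less_imp_le]) simp
    ultimately show ?thesis by (simp add: algebra_simps)
  qed
  have kept: "?\<Psi> d u v = \<Phi> d u v" if "d \<in> diagonal" "(u, v) \<noteq> (s, t)" "ilen u v \<le> k" for d u v
  proof -
    have "ibracket (ebasis s t) (\<Phi> d) u v = 0"
      using that st by (intro ibracket_ebasis_apply_eq_0 inc) auto
    then show ?thesis by (simp only: \<Psi>_apply) simp
  qed
  have "diag_preserved_below k ?\<Psi>"
    unfolding diag_preserved_below_def
  proof (intro ballI allI impI)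
    fix d u v assume d: "d \<in> diagonal" and uv: "u \<noteq> v" and nz: "?\<Psi> d u v \<noteq> 0"
    show "k \<le> ilen u v"
    proof (cases "ilen u v \<le> k")
      case True
      with nz cleared[OF d] have "?\<Psi> d u v = \<Phi> d u v"
        by (intro kept[OF d]) auto
      with nz uv d below show ?thesis by (auto simp: diag_preserved_below_def)
    qed simp
  qed
  with cleared kept that show ?thesis by blast
qed

lemma exp_ad_clears_level:
  fixes S :: "('a::{order,finite} \<times> 'a) set"
    and \<Phi> :: "('a \<Rightarrow> 'a \<Rightarrow> 'k::field) \<Rightarrow> ('a \<Rightarrow> 'a \<Rightarrow> 'k)"
  assumes "lie_automorphism \<Phi>" "diag_preserved_below k \<Phi>"
    and "\<And>d u v. d \<in> diagonal \<Longrightarrow> u < v \<Longrightarrow> ilen u v = k \<Longrightarrow> (u, v) \<notin> S \<Longrightarrow> \<Phi> d u v = 0"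
  shows "\<exists>\<Psi>. lie_automorphism \<Psi> \<and> diag_preserved_below (Suc k) \<Psi> \<and> tilde \<Psi> = tilde \<Phi>"
  using finite[of S] assms
proof (induction S arbitrary: \<Phi> rule: finite_induct)
  case empty
  have "diag_preserved_below (Suc k) \<Phi>"
    unfolding diag_preserved_below_def
  proof (intro ballI allI impI)
    fix d u v assume d: "d \<in> diagonal" and uv: "u \<noteq> v" and nz: "\<Phi> d u v \<noteq> 0"
    have "u < v"
      using lie_automorphism_incidence[OF empty.prems(1) diagonal_incidence[OF d]] uv nz
      by (auto simp: incidence_def less_le)
    then show "Suc k \<le> ilen u v"
      using empty.prems(2,3) d uv nz by (fastforce simp: diag_preserved_below_def)
  qed
  with empty.prems(1) show ?case by blast
next
  case (insert w S)
  obtain s t where w: "w = (s, t)" by fastforce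
  show ?case
  proof (cases "s < t \<and> ilen s t = k")
    case True
    then obtain \<alpha> where \<alpha>: "diag_preserved_below k (exp_ad (ebasis s t) \<alpha> \<circ> \<Phi>)"
      "\<And>d. d \<in> diagonal \<Longrightarrow> (exp_ad (ebasis s t) \<alpha> \<circ> \<Phi>) d s t = 0"
      "\<And>d u v. d \<in> diagonal \<Longrightarrow> (u, v) \<noteq> (s, t) \<Longrightarrow> ilen u v \<le> k \<Longrightarrow>
         (exp_ad (ebasis s t) \<alpha> \<circ> \<Phi>) d u v = \<Phi> d u v"
      using exp_ad_clears_entry[OF insert.prems(1,2)] by blast
    have e: "imult (ebasis s t) (ebasis s t) = 0" "\<And>h. imult (ebasis s t) (imult h (ebasis s t)) = 0"
      using True by (simp_all add: ebasis_square_zero ebasis_sandwich_zero)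
    have "lie_automorphism (exp_ad (ebasis s t) \<alpha> \<circ> \<Phi>)"
      by (rule lie_automorphism_comp[OF lie_automorphism_exp_ad[OF e] insert.prems(1)])
    moreover have "(exp_ad (ebasis s t) \<alpha> \<circ> \<Phi>) d u v = 0"
      if "d \<in> diagonal" "u < v" "ilen u v = k" "(u, v) \<notin> S" for d u v
      using that \<alpha>(2,3)[of d] insert.prems(3)[of d u v] w by (cases "(u, v) = (s, t)") auto
    moreover have "tilde (exp_ad (ebasis s t) \<alpha> \<circ> \<Phi>) = tilde \<Phi>"
      using True
      by (intro tilde_exp_ad_comp[OF insert.prems(1)] filtration_antimono[OF _ ebasis_filtration])
        (auto simp: Suc_le_eq ilen_pos)
    ultimately show ?thesis
      using insert.IH[OF _ \<alpha>(1)] by metis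
  next
    case False
    then have "\<Phi> d u v = 0" if "d \<in> diagonal" "u < v" "ilen u v = k" "(u, v) \<notin> S" for d u v
      using that insert.prems(3)[of d u v] w by auto
    then show ?thesis using insert.IH[OF insert.prems(1,2)] by blast
  qed
qed

lemma exists_diag_preserved_below:
  assumes "lie_automorphism \<Phi>"
  shows "\<exists>\<Psi>. lie_automorphism \<Psi> \<and> diag_preserved_below k \<Psi> \<and> tilde \<Psi> = tilde \<Phi>"
proof (induction k)
  case 0
  show ?case using assms by (auto simp: diag_preserved_below_def)
next
  case (Suc k)
  then obtain \<Psi> where "lie_automorphism \<Psi>" "diag_preserved_below k \<Psi>" "tilde \<Psi> = tilde \<Phi>"
    by blast
  with exp_ad_clears_level[of \<Psi> k UNIV] show ?case by auto
qed

lemma diag_preserved_below_card: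
  assumes "diag_preserved_below (card (UNIV :: 'a set)) \<Phi>" "d \<in> diagonal"
  shows "(\<Phi> :: ('a::{order,finite} \<Rightarrow> 'a \<Rightarrow> 'k::field) \<Rightarrow> _) d \<in> diagonal"
  unfolding diagonal_def
proof (intro CollectI allI impI)
  fix u v :: 'a assume "u \<noteq> v"
  then have "\<Phi> d u v \<noteq> 0 \<Longrightarrow> card (UNIV :: 'a set) \<le> ilen u v"
    using assms unfolding diag_preserved_below_def by blast
  then show "\<Phi> d u v = 0" using ilen_less_card[of u v] by (meson not_le)
qed

section \<open>Automorphisms preserving the diagonal\<close>

lemma lie_automorphism_diagonal_onto:
  assumes lie: "lie_automorphism \<Phi>" and diag: "\<And>d. d \<in> diagonal \<Longrightarrow> \<Phi> d \<in> diagonal"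
    and h: "h \<in> diagonal"
  obtains d where "d \<in> diagonal" "\<Phi> d = h"
proof -
  obtain d where d: "d \<in> diagonal" "\<And>u. \<Phi> d u u = h u u"
    using lie_automorphism_diagonal_preimage[OF lie diagonal_incidence[OF h]] by blast
  have "\<Phi> d u v = h u v" for u v
    using d diag[OF d(1)] h by (cases "u = v") (auto simp: diagonal_def)
  with d(1) that show ?thesis by blast
qed

lemma diagonal_separates_pairs:
  fixes u v u' v' :: "'a::{order,finite}"
  assumes eq: "\<And>d :: 'a \<Rightarrow> 'a \<Rightarrow> 'k::field. d \<in> diagonal \<Longrightarrow> d u' u' - d v' v' = d u u - d v v"
    and "u < v" "u' < v'"
  shows "u' = u \<and> v' = v"
proof -
  have e: "ebasis a a b b = (if b = a then (1::'k) else 0)" for a b :: 'a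
    by (simp add: ebasis_apply)
  have "u' = u"
  proof (rule ccontr)
    assume ne: "u' \<noteq> u"
    have "(ebasis u u u' u' :: 'k) - ebasis u u v' v' = ebasis u u u u - ebasis u u v v"
      using eq[OF ebasis_diagonal] .
    then have "v' = u" using ne assms(2) by (auto simp: e split: if_splits)
    moreover have "(ebasis u' u' u' u' :: 'k) - ebasis u' u' v' v' = ebasis u' u' u u - ebasis u' u' v v"
      using eq[OF ebasis_diagonal] .
    then have "v = u'" using ne assms(3) by (auto simp: e split: if_splits)
    ultimately show False using assms(2,3) ne by auto
  qed
  moreover have "(ebasis v v u' u' :: 'k) - ebasis v v v' v' = ebasis v v u u - ebasis v v v v"
    using eq[OF ebasis_diagonal] .
  then have "v' = v" using \<open>u' = u\<close> assms(2) by (auto simp: e split: if_splits)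
  ultimately show ?thesis by simp
qed

text \<open>\<open>e\<^sub>x\<^sub>y\<close> is a common eigenvector of \<open>ad d\<close>, \<open>d\<close> diagonal, with eigenvalue \<open>d x x - d y y\<close>;
  \<open>\<Phi>\<close> carries it to a common eigenvector of the \<open>ad (\<Phi> d)\<close>.\<close>

lemma lie_automorphism_ebasis_support:
  assumes lie: "lie_automorphism \<Phi>" and diag: "\<And>d. d \<in> diagonal \<Longrightarrow> \<Phi> d \<in> diagonal"
    and "x < y" and nz: "\<Phi> (ebasis x y) u v \<noteq> 0"
  shows "\<And>d. d \<in> diagonal \<Longrightarrow> \<Phi> d u u - \<Phi> d v v = d x x - d y y" and "u < v"
proof -
  let ?f = "\<Phi> (ebasis x y)"
  have xy: "x \<le> y" using \<open>x < y\<close> by simp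
  have f: "?f \<in> incidence" using lie_automorphism_incidence[OF lie ebasis_incidence[OF xy]] .
  show eigen: "\<Phi> d u u - \<Phi> d v v = d x x - d y y" if d: "d \<in> diagonal" for d
  proof -
    have "ibracket (\<Phi> d) ?f = \<Phi> (ibracket d (ebasis x y))"
      using d xy by (simp add: lie_automorphism_ibracket[OF lie] diagonal_incidence)
    also have "\<dots> = iscale (d x x - d y y) ?f"
      using xy by (simp add: ibracket_diagonal_ebasis[OF d] lie_automorphism_iscale[OF lie])
    finally have "(\<Phi> d u u - \<Phi> d v v) * ?f u v = (d x x - d y y) * ?f u v"
      by (simp add: ibracket_diagonal_apply[OF diag[OF d] f] fun_eq_iff iscale_apply)
    with nz show ?thesis by simp
  qed
  have "u \<noteq> v"
    using eigen[OF ebasis_diagonal[of x]] \<open>x < y\<close> by (auto simp: ebasis_apply split: if_splits)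
  moreover have "u \<le> v" using f nz by (auto simp: incidence_def)
  ultimately show "u < v" by simp
qed

lemma lie_automorphism_ebasis_monomial:
  fixes \<Phi> :: "('a::{order,finite} \<Rightarrow> 'a \<Rightarrow> 'k::field) \<Rightarrow> ('a \<Rightarrow> 'a \<Rightarrow> 'k)"
  assumes lie: "lie_automorphism \<Phi>" and diag: "\<And>d. d \<in> diagonal \<Longrightarrow> \<Phi> d \<in> diagonal"
    and "x < y"
  obtains c u v where "u < v" "\<Phi> (ebasis x y) = iscale c (ebasis u v)"
proof -
  let ?f = "\<Phi> (ebasis x y)"
  have "?f \<noteq> 0"
  proof
    assume "?f = 0"
    then have "?f = \<Phi> 0" by (simp add: lie_automorphism_zero[OF lie])
    moreover have "inj_on \<Phi> incidence"
      using lie by (simp add: lie_automorphism_def bij_betw_def)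
    ultimately have "ebasis x y = (0 :: 'a \<Rightarrow> 'a \<Rightarrow> 'k)"
      using \<open>x < y\<close> by (simp add: inj_on_eq_iff)
    then show False by (simp add: ebasis_nonzero)
  qed
  then obtain u v where uv: "?f u v \<noteq> 0" by (auto simp: fun_eq_iff)
  have uv_unique: "u' = u \<and> v' = v" if nz: "?f u' v' \<noteq> 0" for u' v'
  proof -
    have "h u' u' - h v' v' = h u u - h v v" if "h \<in> diagonal" for h :: "'a \<Rightarrow> 'a \<Rightarrow> 'k"
    proof -
      obtain d where "d \<in> diagonal" "\<Phi> d = h"
        using lie_automorphism_diagonal_onto[OF lie diag \<open>h \<in> diagonal\<close>] by blast
      then show ?thesis
        using lie_automorphism_ebasis_support(1)[OF lie diag \<open>x < y\<close>] nz uv by metis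
    qed
    moreover have "u < v" "u' < v'"
      using lie_automorphism_ebasis_support(2)[OF lie diag \<open>x < y\<close>] nz uv by auto
    ultimately show ?thesis by (rule diagonal_separates_pairs)
  qed
  have "?f = iscale (?f u v) (ebasis u v)"
    using uv_unique by (fastforce simp: fun_eq_iff iscale_apply ebasis_apply)
  with lie_automorphism_ebasis_support(2)[OF lie diag \<open>x < y\<close> uv] that show ?thesis by blast
qed

lemma lie_automorphism_monomial_ilen:
  assumes lie: "lie_automorphism \<Phi>" and "x \<le> y" "u \<le> v"
    and mono: "\<Phi> (ebasis x y) = iscale c (ebasis u v)"
  shows "ilen u v = ilen x y"
proof (rule antisym)
  let ?\<Psi> = "inv_into incidence \<Phi>"
  have bij: "bij_betw \<Phi> incidence incidence" using lie by (simp add: lie_automorphism_def)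
  have "ebasis x y = ?\<Psi> (\<Phi> (ebasis x y))"
    using bij_betw_inv_into_left[OF bij ebasis_incidence[OF \<open>x \<le> y\<close>]] by simp
  also have "\<dots> = iscale c (?\<Psi> (ebasis u v))"
    using \<open>u \<le> v\<close> by (simp add: mono lie_automorphism_iscale[OF lie_automorphism_inv_into[OF lie]])
  finally have "c * ?\<Psi> (ebasis u v) x y = 1"
    by (metis ebasis_apply iscale_apply)
  then have "c \<noteq> 0" "?\<Psi> (ebasis u v) x y \<noteq> 0" by auto
  have "\<Phi> (ebasis x y) \<in> filtration (ilen x y)"
    using lie_automorphism_filtration[OF lie ebasis_filtration[OF \<open>x \<le> y\<close>]] .
  with \<open>c \<noteq> 0\<close> show "ilen x y \<le> ilen u v"
    by (auto simp: mono filtration_def iscale_apply ebasis_apply)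
  have "?\<Psi> (ebasis u v) \<in> filtration (ilen u v)"
    using lie_automorphism_filtration[OF lie_automorphism_inv_into[OF lie] ebasis_filtration[OF \<open>u \<le> v\<close>]] .
  with \<open>?\<Psi> (ebasis u v) x y \<noteq> 0\<close> show "ilen u v \<le> ilen x y"
    by (simp add: filtration_def)
qed

lemma lie_automorphism_ebasis_homogeneous:
  assumes lie: "lie_automorphism \<Phi>" and diag: "\<And>d. d \<in> diagonal \<Longrightarrow> \<Phi> d \<in> diagonal"
    and "x \<le> y"
  shows "Lcomp (ilen x y) (\<Phi> (ebasis x y)) = \<Phi> (ebasis x y)"
proof (cases "x = y")
  case True
  show ?thesis
  proof (intro ext)
    fix u v
    show "Lcomp (ilen x y) (\<Phi> (ebasis x y)) u v = \<Phi> (ebasis x y) u v"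
      using True diag[OF ebasis_diagonal[of x]] by (cases "u = v") (auto simp: Lcomp_def diagonal_def)
  qed
next
  case False
  with \<open>x \<le> y\<close> obtain c u v where uv: "u < v" "\<Phi> (ebasis x y) = iscale c (ebasis u v)"
    using lie_automorphism_ebasis_monomial[OF lie diag] by (metis order.not_eq_order_implies_strict)
  then have "ilen u v = ilen x y"
    using lie_automorphism_monomial_ilen[OF lie \<open>x \<le> y\<close>] by simp
  with uv show ?thesis
    by (auto simp: fun_eq_iff Lcomp_def iscale_apply ebasis_apply)
qed

theorem proposition4p5:
  fixes \<phi> :: "('a::{order,finite} \<Rightarrow> 'a \<Rightarrow> 'k::field) \<Rightarrow> ('a \<Rightarrow> 'a \<Rightarrow> 'k)"
  assumes "poset_connected TYPE('a)"
    and "lie_automorphism \<phi>"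
  shows "lie_automorphism (tilde \<phi>)"
proof -
  obtain \<Psi> :: "('a \<Rightarrow> 'a \<Rightarrow> 'k) \<Rightarrow> ('a \<Rightarrow> 'a \<Rightarrow> 'k)"
    where \<Psi>: "lie_automorphism \<Psi>" "diag_preserved_below (card (UNIV :: 'a set)) \<Psi>"
      "tilde \<Psi> = tilde \<phi>"
    using exists_diag_preserved_below[OF assms(2)] by blast
  have diag: "\<And>d. d \<in> diagonal \<Longrightarrow> \<Psi> d \<in> diagonal"
    using diag_preserved_below_card[OF \<Psi>(2)] .
  have "tilde \<Psi> f = \<Psi> f" if "f \<in> incidence" for f
    using tilde_eq_if_homogeneous[OF \<Psi>(1) lie_automorphism_ebasis_homogeneous[OF \<Psi>(1) diag] that] .
  with lie_automorphism_cong[OF \<Psi>(1)] \<Psi>(3) show ?thesis by metis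
qed

end
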